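(* For every digraph $X$, the number of Hamiltonian paths of $X$ and the number of Hamiltonian paths of its complementary digraph $\overline{X}$ have the same parity.
   Context: A digraph $X=(V,E)$: $V$ finite, $E\subset\{(u,v)\in V\times V\mid u\ne v\}$; $\overline{X}=(V,E^c)$ with $(u,v)\in E^c$ iff $u\ne v$ and $(u,v)\notin E$. A Hamiltonian path of $X$ is a listing $(\sigma_1,\dots,\sigma_n)$ of all vertices of $V$ without repetition ($n=|V|$) such that $(\sigma_j,\sigma_{j+1})\in E$ for all $j=1,\dots,n-1$. *)

theory Defs
  imports Main
begin

definition digraph :: "'a set \<Rightarrow> ('a \<times> 'a) set \<Rightarrow> bool" where
  "digraph V E \<longleftrightarrow> finite V \<and> E \<subseteq> {(u, v). u \<in> V \<and> v \<in> V \<and> u \<noteq> v}"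

definition compl_edges :: "'a set \<Rightarrow> ('a \<times> 'a) set \<Rightarrow> ('a \<times> 'a) set" where
  "compl_edges V E = {(u, v). u \<in> V \<and> v \<in> V \<and> u \<noteq> v \<and> (u, v) \<notin> E}"

definition ham_paths :: "'a set \<Rightarrow> ('a \<times> 'a) set \<Rightarrow> 'a list set" where
  "ham_paths V E = {xs. distinct xs \<and> set xs = V \<and>
      (\<forall>j. Suc j < length xs \<longrightarrow> (xs ! j, xs ! Suc j) \<in> E)}"

end

theory Submission
  imports Defs "HOL-Combinatorics.Multiset_Permutations"
begin

text \<open>Deletion--contraction. Adding a missing arc \<open>(u, v)\<close> to \<open>E\<close> creates exactly the new
Hamiltonian paths that traverse \<open>u \<rightarrow> v\<close>; these correspond to the Hamiltonian paths of the
digraph on \<open>V - {u}\<close> obtained by contracting the arc, where \<open>v\<close> inherits the in-arcs of \<open>u\<close>.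
Removing the same arc from the complement loses the paths of the complement of that
contraction. Hence the parity of the sum of the two counts is unchanged up to the parity
for the smaller contracted digraph, and induction on the number of vertices and of missing
arcs reduces everything to the complete digraph, whose \<open>n!\<close> Hamiltonian paths are even in
number for \<open>n \<ge> 2\<close> while its complement has none.\<close>

definition traverses :: "'a list \<Rightarrow> 'a \<Rightarrow> 'a \<Rightarrow> bool" where
  "traverses xs u v \<longleftrightarrow> (\<exists>ys zs. xs = ys @ u # v # zs)"

definition contract_arc :: "('a \<times> 'a) set \<Rightarrow> 'a \<Rightarrow> 'a \<Rightarrow> ('a \<times> 'a) set" where
  "contract_arc E u v = {(x, y). if y = v then (x, u) \<in> E else (x, y) \<in> E}"

definition ham_count_sum :: "'a set \<Rightarrow> ('a \<times> 'a) set \<Rightarrow> nat" where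
  "ham_count_sum V E = card (ham_paths V E) + card (ham_paths V (compl_edges V E))"

lemma ham_paths_successively:
  "ham_paths V E = {xs. distinct xs \<and> set xs = V \<and> successively (\<lambda>x y. (x, y) \<in> E) xs}"
  unfolding ham_paths_def successively_conv_nth by simp

lemma finite_ham_paths: "finite (ham_paths V E)"
  by (rule finite_subset[OF _ finite_permutations_of_set[of V]])
     (auto simp: ham_paths_def permutations_of_set_def)

lemma successively_distinct_cong:
  assumes "distinct xs" "set xs \<subseteq> V"
    and "\<And>x y. x \<in> V \<Longrightarrow> y \<in> V \<Longrightarrow> x \<noteq> y \<Longrightarrow> (x, y) \<in> E \<longleftrightarrow> (x, y) \<in> F"
  shows "successively (\<lambda>x y. (x, y) \<in> E) xs \<longleftrightarrow> successively (\<lambda>x y. (x, y) \<in> F) xs"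
  using assms by (induction xs rule: induct_list012) auto

lemma ham_paths_cong:
  assumes "\<And>x y. x \<in> V \<Longrightarrow> y \<in> V \<Longrightarrow> x \<noteq> y \<Longrightarrow> (x, y) \<in> E \<longleftrightarrow> (x, y) \<in> F"
  shows "ham_paths V E = ham_paths V F"
  unfolding ham_paths_successively using successively_distinct_cong[OF _ _ assms] by blast

lemma ham_paths_complete:
  assumes "compl_edges V E = {}"
  shows "ham_paths V E = permutations_of_set V"
proof -
  have "successively (\<lambda>x y. (x, y) \<in> E) xs" if "distinct xs" "set xs \<subseteq> V" for xs
    using that assms by (induction xs rule: induct_list012) (auto simp: compl_edges_def)
  then show ?thesis
    unfolding ham_paths_successively permutations_of_set_def by blast
qed

lemma traverses_simps [simp]:
  "\<not> traverses [] u v"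
  "\<not> traverses [x] u v"
  "traverses (x # y # zs) u v \<longleftrightarrow> x = u \<and> y = v \<or> traverses (y # zs) u v"
  unfolding traverses_def by (auto simp: Cons_eq_append_conv)

lemma successively_insert_arc:
  assumes "(u, v) \<notin> E"
  shows "successively (\<lambda>x y. (x, y) \<in> E) xs \<longleftrightarrow>
         successively (\<lambda>x y. (x, y) \<in> insert (u, v) E) xs \<and> \<not> traverses xs u v"
  using assms by (induction xs rule: induct_list012) auto

lemma card_ham_paths_insert_arc:
  assumes "(u, v) \<notin> E"
  shows "card (ham_paths V (insert (u, v) E)) =
         card (ham_paths V E) + card {xs \<in> ham_paths V (insert (u, v) E). traverses xs u v}"
proof -
  let ?H = "ham_paths V (insert (u, v) E)"
  have "ham_paths V E = {xs \<in> ?H. \<not> traverses xs u v}"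
    using successively_insert_arc[OF assms] by (auto simp: ham_paths_successively)
  moreover have "card ?H = card {xs \<in> ?H. \<not> traverses xs u v} + card {xs \<in> ?H. traverses xs u v}"
    using card_Int_Diff[OF finite_ham_paths, of V "insert (u, v) E" "{xs. traverses xs u v}"]
    by (simp add: Int_def set_diff_eq)
  ultimately show ?thesis by simp
qed

lemma successively_contract_arc_iff:
  "v \<notin> set (tl xs) \<Longrightarrow>
   successively (\<lambda>x y. (x, y) \<in> contract_arc E u v) xs \<longleftrightarrow> successively (\<lambda>x y. (x, y) \<in> E) xs"
  by (induction xs rule: induct_list012) (auto simp: contract_arc_def)

lemma successively_traverse_iff:
  assumes "v \<notin> set ys" "v \<notin> set zs"
  shows "successively (\<lambda>x y. (x, y) \<in> E) (ys @ u # v # zs) \<longleftrightarrow>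
         (u, v) \<in> E \<and> successively (\<lambda>x y. (x, y) \<in> contract_arc E u v) (ys @ v # zs)"
proof -
  have "v \<notin> set (tl ys)"
    using assms(1) by (cases ys) auto
  then show ?thesis
    using assms successively_contract_arc_iff[of v ys E u] successively_contract_arc_iff[of v "v # zs" E u]
    by (auto simp: successively_append_iff contract_arc_def)
qed

lemma traversing_ham_path_iff:
  assumes "u \<in> V" "u \<noteq> v"
  shows "ys @ u # v # zs \<in> ham_paths V E \<longleftrightarrow>
         (u, v) \<in> E \<and> ys @ v # zs \<in> ham_paths (V - {u}) (contract_arc E u v)"
proof (cases "v \<in> set ys \<or> v \<in> set zs")
  case True
  then show ?thesis by (auto simp: ham_paths_def)
next
  case False
  then show ?thesis
    using assms successively_traverse_iff[of v ys zs E u] by (auto simp: ham_paths_successively)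
qed

lemma card_traversing_ham_paths:
  assumes "u \<in> V" "v \<in> V" "u \<noteq> v" "(u, v) \<in> E"
  shows "card {xs \<in> ham_paths V E. traverses xs u v} = card (ham_paths (V - {u}) (contract_arc E u v))"
proof -
  let ?C = "ham_paths (V - {u}) (contract_arc E u v)"
  define S where "S = {(ys, zs). ys @ v # zs \<in> ?C}"
  have avoids: "u \<notin> set ys \<union> set zs \<and> v \<notin> set ys \<union> set zs" if "(ys, zs) \<in> S" for ys zs
    using that by (auto simp: S_def ham_paths_def)
  have "{xs \<in> ham_paths V E. traverses xs u v} = (\<lambda>(ys, zs). ys @ u # v # zs) ` S"
    using traversing_ham_path_iff[OF assms(1,3)] assms(4) by (auto simp: S_def traverses_def)
  moreover have "?C = (\<lambda>(ys, zs). ys @ v # zs) ` S"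
  proof (intro equalityI subsetI)
    fix t assume "t \<in> ?C"
    moreover have "v \<in> set t"
      using \<open>t \<in> ?C\<close> assms(2,3) by (auto simp: ham_paths_def)
    ultimately show "t \<in> (\<lambda>(ys, zs). ys @ v # zs) ` S"
      by (auto simp: S_def dest!: split_list)
  qed (auto simp: S_def)
  moreover have "inj_on (\<lambda>(ys, zs). ys @ u # v # zs) S" "inj_on (\<lambda>(ys, zs). ys @ v # zs) S"
    using assms(3) by (auto intro!: inj_onI dest!: avoids dest: append_Cons_eq_iff[THEN iffD1, rotated 2])
  ultimately show ?thesis
    by (simp add: card_image)
qed

lemma ham_paths_compl_contract_arc:
  assumes "u \<in> V"
  shows "ham_paths (V - {u}) (compl_edges (V - {u}) (contract_arc E u v)) =
         ham_paths (V - {u}) (contract_arc (compl_edges V E) u v)"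
  using assms by (intro ham_paths_cong) (auto simp: compl_edges_def contract_arc_def)

lemma ham_count_sum_insert_arc:
  assumes "u \<in> V" "v \<in> V" "u \<noteq> v" "(u, v) \<notin> E"
  shows "ham_count_sum V E + 2 * card (ham_paths (V - {u}) (contract_arc E u v)) =
         ham_count_sum V (insert (u, v) E) + ham_count_sum (V - {u}) (contract_arc E u v)"
proof -
  let ?E' = "insert (u, v) E" and ?C = "contract_arc E u v"
  have "contract_arc ?E' u v = ?C"
    using assms(3) by (auto simp: contract_arc_def)
  then have arcs: "card (ham_paths V ?E') = card (ham_paths V E) + card (ham_paths (V - {u}) ?C)"
    using card_ham_paths_insert_arc[OF assms(4)] card_traversing_ham_paths[OF assms(1-3), of ?E']
    by simp
  have "compl_edges V E = insert (u, v) (compl_edges V ?E')" "(u, v) \<notin> compl_edges V ?E'"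
    using assms by (auto simp: compl_edges_def)
  moreover have "(u, v) \<in> compl_edges V E"
    using assms by (simp add: compl_edges_def)
  ultimately have non_arcs: "card (ham_paths V (compl_edges V E)) =
      card (ham_paths V (compl_edges V ?E')) + card (ham_paths (V - {u}) (compl_edges (V - {u}) ?C))"
    using card_ham_paths_insert_arc[of u v "compl_edges V ?E'" V]
      card_traversing_ham_paths[OF assms(1-3), of "compl_edges V E"]
      ham_paths_compl_contract_arc[OF assms(1), of E v]
    by simp
  show ?thesis
    using arcs non_arcs by (simp add: ham_count_sum_def)
qed

lemma ham_paths_no_arcs:
  assumes "2 \<le> card V"
  shows "ham_paths V {} = {}"
proof -
  have "Suc 0 < length xs" if "distinct xs" "set xs = V" for xs :: "'a list"
    using that assms distinct_card by fastforce
  then show ?thesis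
    unfolding ham_paths_def by blast
qed

lemma even_ham_count_sum_complete:
  assumes "finite V" "compl_edges V E = {}"
  shows "even (ham_count_sum V E)"
proof (cases "card V \<le> 1")
  case True
  then have "ham_paths V E = ham_paths V (compl_edges V E)"
    using assms(1) by (intro ham_paths_cong) (auto simp: card_le_Suc0_iff_eq)
  then show ?thesis
    by (simp add: ham_count_sum_def)
next
  case False
  then have "even (fact (card V) :: nat)"
    by (intro dvd_fact) auto
  then show ?thesis
    using False assms ham_paths_complete[of V E] ham_paths_no_arcs[of V]
    by (simp add: ham_count_sum_def)
qed

lemma even_ham_count_sum:
  assumes "finite V"
  shows "even (ham_count_sum V E)"
  using assms
proof (induction V arbitrary: E rule: finite_remove_induct)
  case empty
  then show ?case
    by (simp add: even_ham_count_sum_complete compl_edges_def)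
next
  case (remove V)
  have "even (ham_count_sum V E)" if "card (compl_edges V E) = n" for n E
    using that
  proof (induction n arbitrary: E)
    case 0
    moreover have "finite (compl_edges V E)"
      using remove.hyps(1) by (auto simp: compl_edges_def intro: finite_subset[of _ "V \<times> V"])
    ultimately show ?case
      using remove.hyps(1) even_ham_count_sum_complete by simp
  next
    case (Suc n)
    then obtain u v where missing: "(u, v) \<in> compl_edges V E"
      by (metis card.empty nat.distinct(1) ex_in_conv surj_pair)
    then have uv: "u \<in> V" "v \<in> V" "u \<noteq> v" "(u, v) \<notin> E"
      by (auto simp: compl_edges_def)
    have "compl_edges V (insert (u, v) E) = compl_edges V E - {(u, v)}"
      by (auto simp: compl_edges_def)
    then have "even (ham_count_sum V (insert (u, v) E))"
      using Suc missing by simp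
    moreover have "even (ham_count_sum (V - {u}) (contract_arc E u v))"
      using remove.IH uv(1) by blast
    ultimately show ?case
      using ham_count_sum_insert_arc[OF uv] by presburger
  qed
  then show ?case by blast
qed

theorem mainTheorem16:
  fixes V :: "'a set" and E :: "('a \<times> 'a) set"
  assumes "digraph V E"
  shows "even (card (ham_paths V E)) \<longleftrightarrow> even (card (ham_paths V (compl_edges V E)))"
  using even_ham_count_sum[of V E] assms by (auto simp: digraph_def ham_count_sum_def)

end
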